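(* Every rule of the sequent calculus $\mathbf{G}$ for $\text{HXPath}_{\rm D}$ is invertible: for every instance of every rule of $\mathbf G$ and every premiss $S$ of that instance, there is a derivation in $\mathbf G$ with root $S$ all of whose leaves are either instances of the axioms (Ax) or ($\bot$) or the conclusion sequent of that rule instance.
   Context: Syntax of $\text{HXPath}_{\rm D}$: fix pairwise disjoint sets $\mathsf{Prop}$ (propositions, countably infinite), $\mathsf{Nom}$ (nominals, countably infinite), $\mathsf{Mod}$ (modalities, finite), $\mathsf{Cmp}$ (comparisons, finite). Path expressions $\alpha,\beta ::= \mathsf{a} \mid i{:} \mid \varphi? \mid \alpha\beta$ and node expressions $\varphi,\psi ::= p \mid i \mid \bot \mid \varphi\to\psi \mid @_i\varphi \mid \langle \mathsf{a}\rangle\varphi \mid \langle\alpha =_{\mathsf{c}} \beta\rangle \mid \langle \alpha\neq_{\mathsf{c}}\beta\rangle$, with $p\in\mathsf{Prop}$, $i\in\mathsf{Nom}$, $\mathsf{a}\in\mathsf{Mod}$, $\mathsf{c}\in\mathsf{Cmp}$. Abbreviations: $\top:=\bot\to\bot$, $\neg\varphi:=\varphi\to\bot$, $\varphi\lor\psi := \neg\varphi\to\psi$, $\varphi\land\psi:=\neg(\varphi\to\neg\psi)$; $\epsilon:=\top?$; $\langle j{:}\rangle\varphi := @_j\varphi$, $\langle\psi?\rangle\varphi:=\psi\land\varphi$, $\langle\alpha\beta\rangle\varphi:=\langle\alpha\rangle\langle\beta\rangle\varphi$. The symbol $\blacktriangle$ stands for either $=_{\mathsf{c}}$ or $\neq_{\mathsf{c}}$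 (for some $\mathsf{c}$). Sequents: a sequent $\Gamma\vdash\Delta$ consists of finite (possibly empty) sets $\Gamma,\Delta$ of node expressions each of the form $\langle i{:}\blacktriangle j{:}\rangle$ or $@_i\varphi$. Notation "$\varphi,\Gamma$" means $\{\varphi\}\cup\Gamma$. The calculus $\mathbf{G}$ (each rule written premisses $\Rightarrow$ conclusion): (Ax) axiom $\varphi,\Gamma\vdash\Delta,\varphi$ where $\varphi$ is of the form $@_ip$, $@_ij$ or $\langle i{:}=_{\mathsf c}j{:}\rangle$; ($\bot$) axiom $@_i\bot,\Gamma\vdash\Delta$; ($\to$L) $\Gamma\vdash\Delta,@_i\varphi$ and $@_i\psi,\Gamma\vdash\Delta$ $\Rightarrow$ $@_i(\varphi\to\psi),\Gamma\vdash\Delta$; ($\to$R) $@_i\varphi,\Gamma\vdash\Delta,@_i\psi\Rightarrow\Gamma\vdash\Delta,@_i(\varphi\to\psi)$; ($@$T) $@_ii,\Gamma\vdash\Delta\Rightarrow\Gamma\vdash\Delta$; ($@5$) $@_jk,@_ij,@_ik,\Gamma\vdash\Delta\Rightarrow @_ij,@_ik,\Gamma\vdash\Delta$; (Nom) $@_ij,\Gamma\vdash\Delta\Rightarrow\Gamma\vdash\Delta$, $j$ not in the conclusion; (S$_1$) $@_j\varphi,@_ij,@_i\varphi,\Gamma\vdash\Delta\Rightarrow @_ij,@_i\varphi,\Gamma\vdash\Delta$, $\varphi$ of the form $p$, $\bot$ or $\langle\mathsf a\rangle k$; (S$_2$) $@_i\langle\mathsf a\rangle k,@_jk,@_i\langle\mathsf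 a\rangle j,\Gamma\vdash\Delta\Rightarrow @_jk,@_i\langle\mathsf a\rangle j,\Gamma\vdash\Delta$; (S$_3$) $\langle j{:}=_{\mathsf c}k{:}\rangle,@_ij,\langle i{:}=_{\mathsf c}k{:}\rangle,\Gamma\vdash\Delta\Rightarrow @_ij,\langle i{:}=_{\mathsf c}k{:}\rangle,\Gamma\vdash\Delta$; ($@$L) $@_i\varphi,\Gamma\vdash\Delta\Rightarrow @_j@_i\varphi,\Gamma\vdash\Delta$; ($@$R) $\Gamma\vdash\Delta,@_i\varphi\Rightarrow\Gamma\vdash\Delta,@_j@_i\varphi$; ($\langle\mathsf a\rangle$L) $@_i\langle\mathsf a\rangle j,@_j\varphi,\Gamma\vdash\Delta\Rightarrow @_i\langle\mathsf a\rangle\varphi,\Gamma\vdash\Delta$, $j$ not in the conclusion; ($\langle\mathsf a\rangle$R) $@_i\langle\mathsf a\rangle j,\Gamma\vdash\Delta,@_i\langle\mathsf a\rangle\varphi,@_j\varphi\Rightarrow @_i\langle\mathsf a\rangle j,\Gamma\vdash\Delta,@_i\langle\mathsf a\rangle\varphi$; ($\langle\blacktriangle\rangle$L) $@_i\langle\alpha\rangle j,@_i\langle\beta\rangle k,\langle j{:}\blacktriangle k{:}\rangle,\Gamma\vdash\Delta\Rightarrow @_i\langle\alpha\blacktriangle\beta\rangle,\Gamma\vdash\Delta$, $j,k$ distinct and not in the conclusion; ($\langle\blacktriangle\rangle$R) $@_i\langle\alpha\rangle j,@_i\langle\beta\rangle k,\Gamma\vdash\Delta,@_i\langle\alpha\blacktriangle\beta\rangle,\langle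 j{:}\blacktriangle k{:}\rangle\Rightarrow @_i\langle\alpha\rangle j,@_i\langle\beta\rangle k,\Gamma\vdash\Delta,@_i\langle\alpha\blacktriangle\beta\rangle$; (EqT) $\langle i{:}=_{\mathsf c}i{:}\rangle,\Gamma\vdash\Delta\Rightarrow\Gamma\vdash\Delta$; (Eq5) $\langle j{:}=_{\mathsf c}k{:}\rangle,\langle i{:}=_{\mathsf c}j{:}\rangle,\langle i{:}=_{\mathsf c}k{:}\rangle,\Gamma\vdash\Delta\Rightarrow\langle i{:}=_{\mathsf c}j{:}\rangle,\langle i{:}=_{\mathsf c}k{:}\rangle,\Gamma\vdash\Delta$; (NEqL) $\Gamma\vdash\Delta,\langle i{:}=_{\mathsf c}j{:}\rangle\Rightarrow\langle i{:}\neq_{\mathsf c}j{:}\rangle,\Gamma\vdash\Delta$; (NEqR) $\langle i{:}=_{\mathsf c}j{:}\rangle,\Gamma\vdash\Delta\Rightarrow\Gamma\vdash\Delta,\langle i{:}\neq_{\mathsf c}j{:}\rangle$; (Cut) $\Gamma\vdash\Delta,\varphi$ and $\varphi,\Gamma'\vdash\Delta'\Rightarrow\Gamma,\Gamma'\vdash\Delta,\Delta'$; (WL) $\Gamma\vdash\Delta\Rightarrow\varphi,\Gamma\vdash\Delta$; (WR) $\Gamma\vdash\Delta\Rightarrow\Gamma\vdash\Delta,\varphi$. Here $@_i\langle\alpha\rangle j$ for a path $\alpha$ is understood via the abbreviations above. A derivation is a finite tree of sequents in which each non-leaf node is the conclusion of an instance of a rule of $\mathbf G$ (any rule, including (Cut))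 whose premisses are its children.
   Formalization: Invertibility is claimed only for the rules of G other than (Cut), (WL) and (WR), while the derivations may still use every rule of G, including (Cut). Each condition added here is assumed in the paper as well or is needed for the statement above to hold. *)

theory Defs
  imports Main
begin

text \<open>Propositions and nominals are both represented by natural numbers
(countably infinite sets); modalities 'm and comparisons 'c range over finite types.\<close>

type_synonym propn = nat
type_synonym nom = nat

datatype ('m, 'c) path =
    PMod 'm
  | PNom nom
  | PTest "('m, 'c) node"
  | PComp "('m, 'c) path" "('m, 'c) path"
and ('m, 'c) node =
    Prop propn
  | Nom nom
  | Bot
  | Imp "('m, 'c) node" "('m, 'c) node"
  | At nom "('m, 'c) node"
  | Dia 'm "('m, 'c) node"
  | Eq "('m, 'c) path" 'c "('m, 'c) path"
  | Neq "('m, 'c) path" 'c "('m, 'c) path"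

definition Top :: "('m, 'c) node" where "Top = Imp Bot Bot"
definition Neg :: "('m, 'c) node \<Rightarrow> ('m, 'c) node" where "Neg \<phi> = Imp \<phi> Bot"
definition Conj :: "('m, 'c) node \<Rightarrow> ('m, 'c) node \<Rightarrow> ('m, 'c) node" where
  "Conj \<phi> \<psi> = Neg (Imp \<phi> (Neg \<psi>))"

fun dia_path :: "('m, 'c) path \<Rightarrow> ('m, 'c) node \<Rightarrow> ('m, 'c) node" where
  "dia_path (PMod a) \<phi> = Dia a \<phi>"
| "dia_path (PNom j) \<phi> = At j \<phi>"
| "dia_path (PTest \<psi>) \<phi> = Conj \<psi> \<phi>"
| "dia_path (PComp \<alpha> \<beta>) \<phi> = dia_path \<alpha> (dia_path \<beta> \<phi>)"

definition Cmpf :: "bool \<Rightarrow> ('m, 'c) path \<Rightarrow> 'c \<Rightarrow> ('m, 'c) path \<Rightarrow> ('m, 'c) node" where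
  "Cmpf b \<alpha> c \<beta> = (if b then Eq \<alpha> c \<beta> else Neq \<alpha> c \<beta>)"

abbreviation EqN :: "nom \<Rightarrow> 'c \<Rightarrow> nom \<Rightarrow> ('m, 'c) node" where
  "EqN i c j \<equiv> Eq (PNom i) c (PNom j)"
abbreviation NeqN :: "nom \<Rightarrow> 'c \<Rightarrow> nom \<Rightarrow> ('m, 'c) node" where
  "NeqN i c j \<equiv> Neq (PNom i) c (PNom j)"

primrec noms_path :: "('m, 'c) path \<Rightarrow> nom set"
and noms_node :: "('m, 'c) node \<Rightarrow> nom set" where
  "noms_path (PMod a) = {}"
| "noms_path (PNom i) = {i}"
| "noms_path (PTest \<phi>) = noms_node \<phi>"
| "noms_path (PComp \<alpha> \<beta>) = noms_path \<alpha> \<union> noms_path \<beta>"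
| "noms_node (Prop p) = {}"
| "noms_node (Nom i) = {i}"
| "noms_node Bot = {}"
| "noms_node (Imp \<phi> \<psi>) = noms_node \<phi> \<union> noms_node \<psi>"
| "noms_node (At i \<phi>) = insert i (noms_node \<phi>)"
| "noms_node (Dia a \<phi>) = noms_node \<phi>"
| "noms_node (Eq \<alpha> c \<beta>) = noms_path \<alpha> \<union> noms_path \<beta>"
| "noms_node (Neq \<alpha> c \<beta>) = noms_path \<alpha> \<union> noms_path \<beta>"

type_synonym ('m, 'c) seq = "('m, 'c) node set \<times> ('m, 'c) node set"

definition seq_formula :: "('m, 'c) node \<Rightarrow> bool" where
  "seq_formula \<phi> \<longleftrightarrow> (\<exists>i \<psi>. \<phi> = At i \<psi>) \<or> (\<exists>i c j. \<phi> = EqN i c j \<or> \<phi> = NeqN i c j)"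

definition wf_seq :: "('m, 'c) seq \<Rightarrow> bool" where
  "wf_seq S \<longleftrightarrow> finite (fst S) \<and> finite (snd S) \<and>
     (\<forall>\<phi> \<in> fst S \<union> snd S. seq_formula \<phi>)"

definition noms_seq :: "('m, 'c) seq \<Rightarrow> nom set" where
  "noms_seq S = (\<Union>\<phi> \<in> fst S \<union> snd S. noms_node \<phi>)"

inductive G_axiom :: "('m, 'c) seq \<Rightarrow> bool" where
  Ax_prop: "G_axiom (insert (At i (Prop p)) \<Gamma>, insert (At i (Prop p)) \<Delta>)"
| Ax_nom: "G_axiom (insert (At i (Nom j)) \<Gamma>, insert (At i (Nom j)) \<Delta>)"
| Ax_eq: "G_axiom (insert (EqN i c j) \<Gamma>, insert (EqN i c j) \<Delta>)"
| Ax_bot: "G_axiom (insert (At i Bot) \<Gamma>, \<Delta>)"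

inductive G_logical_rule :: "('m, 'c) seq list \<Rightarrow> ('m, 'c) seq \<Rightarrow> bool" where
  ImpL: "G_logical_rule [(\<Gamma>, insert (At i \<phi>) \<Delta>), (insert (At i \<psi>) \<Gamma>, \<Delta>)]
           (insert (At i (Imp \<phi> \<psi>)) \<Gamma>, \<Delta>)"
| ImpR: "G_logical_rule [(insert (At i \<phi>) \<Gamma>, insert (At i \<psi>) \<Delta>)]
           (\<Gamma>, insert (At i (Imp \<phi> \<psi>)) \<Delta>)"
| AtT: "G_logical_rule [(insert (At i (Nom i)) \<Gamma>, \<Delta>)] (\<Gamma>, \<Delta>)"
| At5: "G_logical_rule [(insert (At j (Nom k)) (insert (At i (Nom j)) (insert (At i (Nom k)) \<Gamma>)), \<Delta>)]
           (insert (At i (Nom j)) (insert (At i (Nom k)) \<Gamma>), \<Delta>)"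
| NomR: "j \<notin> noms_seq (\<Gamma>, \<Delta>) \<Longrightarrow>
         G_logical_rule [(insert (At i (Nom j)) \<Gamma>, \<Delta>)] (\<Gamma>, \<Delta>)"
| S1: "(\<exists>p. \<phi> = Prop p) \<or> \<phi> = Bot \<or> (\<exists>a k. \<phi> = Dia a (Nom k)) \<Longrightarrow>
       G_logical_rule [(insert (At j \<phi>) (insert (At i (Nom j)) (insert (At i \<phi>) \<Gamma>)), \<Delta>)]
         (insert (At i (Nom j)) (insert (At i \<phi>) \<Gamma>), \<Delta>)"
| S2: "G_logical_rule
         [(insert (At i (Dia a (Nom k))) (insert (At j (Nom k)) (insert (At i (Dia a (Nom j))) \<Gamma>)), \<Delta>)]
         (insert (At j (Nom k)) (insert (At i (Dia a (Nom j))) \<Gamma>), \<Delta>)"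
| S3: "G_logical_rule
         [(insert (EqN j c k) (insert (At i (Nom j)) (insert (EqN i c k) \<Gamma>)), \<Delta>)]
         (insert (At i (Nom j)) (insert (EqN i c k) \<Gamma>), \<Delta>)"
| AtL: "G_logical_rule [(insert (At i \<phi>) \<Gamma>, \<Delta>)] (insert (At j (At i \<phi>)) \<Gamma>, \<Delta>)"
| AtR: "G_logical_rule [(\<Gamma>, insert (At i \<phi>) \<Delta>)] (\<Gamma>, insert (At j (At i \<phi>)) \<Delta>)"
| DiaL: "j \<notin> noms_seq (insert (At i (Dia a \<phi>)) \<Gamma>, \<Delta>) \<Longrightarrow>
         G_logical_rule [(insert (At i (Dia a (Nom j))) (insert (At j \<phi>) \<Gamma>), \<Delta>)]
           (insert (At i (Dia a \<phi>)) \<Gamma>, \<Delta>)"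
| DiaR: "G_logical_rule
           [(insert (At i (Dia a (Nom j))) \<Gamma>, insert (At i (Dia a \<phi>)) (insert (At j \<phi>) \<Delta>))]
           (insert (At i (Dia a (Nom j))) \<Gamma>, insert (At i (Dia a \<phi>)) \<Delta>)"
| CmpL: "j \<noteq> k \<Longrightarrow> j \<notin> noms_seq (insert (At i (Cmpf b \<alpha> c \<beta>)) \<Gamma>, \<Delta>) \<Longrightarrow>
         k \<notin> noms_seq (insert (At i (Cmpf b \<alpha> c \<beta>)) \<Gamma>, \<Delta>) \<Longrightarrow>
         G_logical_rule
           [(insert (At i (dia_path \<alpha> (Nom j))) (insert (At i (dia_path \<beta> (Nom k)))
               (insert (Cmpf b (PNom j) c (PNom k)) \<Gamma>)), \<Delta>)]
           (insert (At i (Cmpf b \<alpha> c \<beta>)) \<Gamma>, \<Delta>)"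
| CmpR: "G_logical_rule
           [(insert (At i (dia_path \<alpha> (Nom j))) (insert (At i (dia_path \<beta> (Nom k))) \<Gamma>),
             insert (At i (Cmpf b \<alpha> c \<beta>)) (insert (Cmpf b (PNom j) c (PNom k)) \<Delta>))]
           (insert (At i (dia_path \<alpha> (Nom j))) (insert (At i (dia_path \<beta> (Nom k))) \<Gamma>),
             insert (At i (Cmpf b \<alpha> c \<beta>)) \<Delta>)"
| EqT: "G_logical_rule [(insert (EqN i c i) \<Gamma>, \<Delta>)] (\<Gamma>, \<Delta>)"
| Eq5: "G_logical_rule [(insert (EqN j c k) (insert (EqN i c j) (insert (EqN i c k) \<Gamma>)), \<Delta>)]
          (insert (EqN i c j) (insert (EqN i c k) \<Gamma>), \<Delta>)"
| NEqL: "G_logical_rule [(\<Gamma>, insert (EqN i c j) \<Delta>)] (insert (NeqN i c j) \<Gamma>, \<Delta>)"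
| NEqR: "G_logical_rule [(insert (EqN i c j) \<Gamma>, \<Delta>)] (\<Gamma>, insert (NeqN i c j) \<Delta>)"

inductive G_structural_rule :: "('m, 'c) seq list \<Rightarrow> ('m, 'c) seq \<Rightarrow> bool" where
  Cut: "G_structural_rule [(\<Gamma>, insert \<phi> \<Delta>), (insert \<phi> \<Gamma>', \<Delta>')] (\<Gamma> \<union> \<Gamma>', \<Delta> \<union> \<Delta>')"
| WL: "G_structural_rule [(\<Gamma>, \<Delta>)] (insert \<phi> \<Gamma>, \<Delta>)"
| WR: "G_structural_rule [(\<Gamma>, \<Delta>)] (\<Gamma>, insert \<phi> \<Delta>)"

definition G_logical_inst :: "('m, 'c) seq list \<Rightarrow> ('m, 'c) seq \<Rightarrow> bool" where
  "G_logical_inst Ps C \<longleftrightarrow> G_logical_rule Ps C \<and> wf_seq C \<and> (\<forall>P \<in> set Ps. wf_seq P)"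

definition G_inst :: "('m, 'c) seq list \<Rightarrow> ('m, 'c) seq \<Rightarrow> bool" where
  "G_inst Ps C \<longleftrightarrow> (G_logical_rule Ps C \<or> G_structural_rule Ps C) \<and>
     wf_seq C \<and> (\<forall>P \<in> set Ps. wf_seq P)"

definition G_axiom_inst :: "('m, 'c) seq \<Rightarrow> bool" where
  "G_axiom_inst S \<longleftrightarrow> G_axiom S \<and> wf_seq S"

inductive derivable_from :: "('m, 'c) seq set \<Rightarrow> ('m, 'c) seq \<Rightarrow> bool" for H where
  hyp: "S \<in> H \<Longrightarrow> derivable_from H S"
| ax: "G_axiom_inst S \<Longrightarrow> derivable_from H S"
| rule: "G_inst Ps C \<Longrightarrow> (\<forall>P \<in> set Ps. derivable_from H P) \<Longrightarrow> derivable_from H C"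

end

theory Submission
  imports Defs
begin

text \<open>Rules whose premisses contain their conclusion, such as the structural rules for
  nominals and equalities, (\<langle>a\<rangle>R) and (\<langle>\<blacktriangle>\<rangle>R), are inverted by weakening alone.
  Every other rule has a principal formula \<chi>, and a premiss S is recovered from the
  conclusion by a cut on \<chi>: one cut premiss is the conclusion weakened, the other puts
  \<chi> on the opposite side of S, where the dual rule applied to the side formulas of S
  reduces it to identity sequents @_i \<phi>, \<Gamma> \<turnstile> \<Delta>, @_i \<phi>. These are derivable
  for arbitrary \<phi> by induction on \<phi>, using fresh nominals for the rules with eigenvariables.\<close>

lemma wf_seq_pair [simp]:
  "wf_seq (A, B) \<longleftrightarrow>
     finite A \<and> finite B \<and> (\<forall>\<phi>\<in>A. seq_formula \<phi>) \<and> (\<forall>\<phi>\<in>B. seq_formula \<phi>)"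
  unfolding wf_seq_def by auto

lemma seq_formula_At [simp]: "seq_formula (At i \<phi>)"
  and seq_formula_EqN [simp]: "seq_formula (EqN i c j)"
  and seq_formula_NeqN [simp]: "seq_formula (NeqN i c j)"
  and seq_formula_Cmpf_PNom [simp]: "seq_formula (Cmpf b (PNom j) c (PNom k))"
  by (auto simp: seq_formula_def Cmpf_def)

lemma finite_noms:
  fixes \<alpha> :: "('m, 'c) path" and \<phi> :: "('m, 'c) node"
  shows "finite (noms_path \<alpha>)" and "finite (noms_node \<phi>)"
  by (induct \<alpha> and \<phi>) auto

lemma finite_noms_seq: "wf_seq S \<Longrightarrow> finite (noms_seq S)"
  by (auto simp: noms_seq_def wf_seq_def finite_noms)

(* C = C' lets a rule instance be matched against a sequent only up to reordering and
   absorption of inserted formulas. *)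
lemma derivable_from_logical_rule:
  assumes "G_logical_rule Ps C" and "C = C'" and "wf_seq C"
    and "\<forall>P\<in>set Ps. wf_seq P \<and> derivable_from H P"
  shows "derivable_from H C'"
  using assms derivable_from.rule[of Ps C H] unfolding G_inst_def by auto

lemma derivable_from_axiom:
  "G_axiom S \<Longrightarrow> S = S' \<Longrightarrow> wf_seq S \<Longrightarrow> derivable_from H S'"
  using derivable_from.ax[of S' H] unfolding G_axiom_inst_def by auto

lemma derivable_from_cut:
  assumes "derivable_from H (\<Gamma>, insert \<phi> \<Delta>)" and "derivable_from H (insert \<phi> \<Gamma>, \<Delta>)"
    and "wf_seq (\<Gamma>, \<Delta>)" and "seq_formula \<phi>"
  shows "derivable_from H (\<Gamma>, \<Delta>)"
  using assms derivable_from.rule[of "[(\<Gamma>, insert \<phi> \<Delta>), (insert \<phi> \<Gamma>, \<Delta>)]" "(\<Gamma>, \<Delta>)" H]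
    G_structural_rule.Cut[of \<Gamma> \<phi> \<Delta> \<Gamma> \<Delta>]
  unfolding G_inst_def by auto

lemma derivable_from_weaken_left:
  "finite X \<Longrightarrow> derivable_from H (A, B) \<Longrightarrow> wf_seq (X \<union> A, B) \<Longrightarrow> derivable_from H (X \<union> A, B)"
proof (induction X rule: finite_induct)
  case (insert x X)
  then show ?case
    using derivable_from.rule[of "[(X \<union> A, B)]" "(insert x X \<union> A, B)" H]
      G_structural_rule.WL[of "X \<union> A" B x]
    unfolding G_inst_def by auto
qed simp

lemma derivable_from_weaken_right:
  "finite X \<Longrightarrow> derivable_from H (A, B) \<Longrightarrow> wf_seq (A, X \<union> B) \<Longrightarrow> derivable_from H (A, X \<union> B)"
proof (induction X rule: finite_induct)
  case (insert x X)
  then show ?case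
    using derivable_from.rule[of "[(A, X \<union> B)]" "(A, insert x X \<union> B)" H]
      G_structural_rule.WR[of A "X \<union> B" x]
    unfolding G_inst_def by auto
qed simp

lemma derivable_from_weaken:
  assumes "derivable_from H (A, B)" and "A \<subseteq> A'" and "B \<subseteq> B'" and "wf_seq (A', B')"
  shows "derivable_from H (A', B')"
proof -
  have "derivable_from H (A' \<union> A, B)"
    using assms by (intro derivable_from_weaken_left) (auto dest: finite_subset)
  then have "derivable_from H (A' \<union> A, B' \<union> B)"
    using assms by (intro derivable_from_weaken_right) (auto dest: finite_subset)
  then show ?thesis
    using assms(2,3) by (simp add: Un_absorb2)
qed

lemma derivable_from_hyp_weakened:
  "\<Gamma> \<subseteq> A \<Longrightarrow> \<Delta> \<subseteq> B \<Longrightarrow> wf_seq (A, B) \<Longrightarrow> derivable_from {(\<Gamma>, \<Delta>)} (A, B)"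
  by (rule derivable_from_weaken) (auto intro: derivable_from.hyp)

lemma derivable_from_by_left_cut:
  assumes "derivable_from {(insert \<chi> \<Gamma>, \<Delta>)} (A, insert \<chi> B)"
    and "\<Gamma> \<subseteq> A" and "\<Delta> \<subseteq> B" and "wf_seq (insert \<chi> \<Gamma>, \<Delta>)" and "wf_seq (A, B)"
  shows "derivable_from {(insert \<chi> \<Gamma>, \<Delta>)} (A, B)"
  using assms by (intro derivable_from_cut[of _ A \<chi> B]) (auto intro: derivable_from_hyp_weakened)

lemma derivable_from_by_right_cut:
  assumes "derivable_from {(\<Gamma>, insert \<chi> \<Delta>)} (insert \<chi> A, B)"
    and "\<Gamma> \<subseteq> A" and "\<Delta> \<subseteq> B" and "wf_seq (\<Gamma>, insert \<chi> \<Delta>)" and "wf_seq (A, B)"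
  shows "derivable_from {(\<Gamma>, insert \<chi> \<Delta>)} (A, B)"
  using assms by (intro derivable_from_cut[of _ A \<chi> B]) (auto intro: derivable_from_hyp_weakened)

lemma derivable_from_Neq_left:
  "EqN i c j \<in> A \<Longrightarrow> wf_seq (A, B) \<Longrightarrow> derivable_from H (insert (NeqN i c j) A, B)"
  by (rule derivable_from_logical_rule[OF G_logical_rule.NEqL[of A i c j B]])
    (auto intro: derivable_from_axiom[OF G_axiom.Ax_eq[of i c j A B]] simp: insert_absorb)

lemma derivable_from_Neq_right:
  "EqN i c j \<in> B \<Longrightarrow> wf_seq (A, B) \<Longrightarrow> derivable_from H (A, insert (NeqN i c j) B)"
  by (rule derivable_from_logical_rule[OF G_logical_rule.NEqR[of i c j A B]])
    (auto intro: derivable_from_axiom[OF G_axiom.Ax_eq[of i c j A B]] simp: insert_absorb)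

lemma derivable_from_identity_Cmpf_PNom:
  assumes "Cmpf b (PNom j) c (PNom k) \<in> A" and "Cmpf b (PNom j) c (PNom k) \<in> B"
    and "wf_seq (A, B)"
  shows "derivable_from H (A, B)"
proof (cases b)
  case True
  with assms show ?thesis
    by (intro derivable_from_axiom[OF G_axiom.Ax_eq[of j c k A B]])
      (auto simp: Cmpf_def insert_absorb)
next
  case False
  with assms have N: "NeqN j c k \<in> A" "NeqN j c k \<in> B"
    by (auto simp: Cmpf_def)
  with assms(3) have "derivable_from H (insert (NeqN j c k) (insert (EqN j c k) A), B)"
    by (intro derivable_from_Neq_left) auto
  with N assms(3) show ?thesis
    by (intro derivable_from_logical_rule[OF G_logical_rule.NEqR[of j c k A B]])
      (auto simp: insert_absorb)
qed

lemma derivable_from_Cmpf_right: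
  assumes "At i (dia_path \<alpha> (Nom j)) \<in> A" and "At i (dia_path \<beta> (Nom k)) \<in> A"
    and "Cmpf b (PNom j) c (PNom k) \<in> A" and "wf_seq (A, B)"
  shows "derivable_from H (A, insert (At i (Cmpf b \<alpha> c \<beta>)) B)"
  using assms
  by (intro derivable_from_logical_rule[OF G_logical_rule.CmpR[of i \<alpha> j \<beta> k A b c B]])
    (auto simp: insert_absorb intro: derivable_from_identity_Cmpf_PNom)

lemma derivable_from_identity_Cmpf:
  assumes "At i (Cmpf b \<alpha> c \<beta>) \<in> A" and "At i (Cmpf b \<alpha> c \<beta>) \<in> B" and "wf_seq (A, B)"
  shows "derivable_from H (A, B)"
proof -
  have "finite (noms_seq (A, B))"
    using assms(3) by (rule finite_noms_seq)
  then obtain j k where "j \<notin> noms_seq (A, B)" and "k \<notin> insert j (noms_seq (A, B))"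
    by (metis ex_new_if_finite finite_insert infinite_UNIV_nat)
  moreover have "derivable_from H (insert (At i (dia_path \<alpha> (Nom j)))
      (insert (At i (dia_path \<beta> (Nom k))) (insert (Cmpf b (PNom j) c (PNom k)) A)),
      insert (At i (Cmpf b \<alpha> c \<beta>)) B)"
    using assms(3) by (intro derivable_from_Cmpf_right) auto
  ultimately show ?thesis
    using assms
    by (intro derivable_from_logical_rule[OF G_logical_rule.CmpL[of j k i b \<alpha> c \<beta> A B]])
      (auto simp: insert_absorb)
qed

lemma derivable_from_identity:
  "At i \<phi> \<in> A \<Longrightarrow> At i \<phi> \<in> B \<Longrightarrow> wf_seq (A, B) \<Longrightarrow> derivable_from H (A, B)"
proof (induction \<phi> arbitrary: i A B rule: node.induct[where ?P1.0 = "\<lambda>_. True"])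
  case (Prop p)
  then show ?case
    by (intro derivable_from_axiom[OF G_axiom.Ax_prop[of i p A B]]) (auto simp: insert_absorb)
next
  case (Nom j)
  then show ?case
    by (intro derivable_from_axiom[OF G_axiom.Ax_nom[of i j A B]]) (auto simp: insert_absorb)
next
  case Bot
  then show ?case
    by (intro derivable_from_axiom[OF G_axiom.Ax_bot[of i A B]]) (auto simp: insert_absorb)
next
  case (Imp \<phi> \<psi>)
  have "derivable_from H (insert (At i \<phi>) A, insert (At i \<psi>) B)"
    using Imp.prems
    by (intro derivable_from_logical_rule
        [OF G_logical_rule.ImpL[of "insert (At i \<phi>) A" i \<phi> "insert (At i \<psi>) B" \<psi>]])
      (auto simp: insert_absorb intro: Imp.IH)
  with Imp.prems show ?case
    by (intro derivable_from_logical_rule[OF G_logical_rule.ImpR[of i \<phi> A \<psi> B]])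
      (auto simp: insert_absorb)
next
  case (At j \<psi>)
  have "derivable_from H (A, insert (At j \<psi>) B)"
    using At.prems
    by (intro derivable_from_logical_rule
        [OF G_logical_rule.AtL[of j \<psi> A "insert (At j \<psi>) B" i]])
      (auto simp: insert_absorb intro: At.IH)
  with At.prems show ?case
    by (intro derivable_from_logical_rule[OF G_logical_rule.AtR[of A j \<psi> B i]])
      (auto simp: insert_absorb)
next
  case (Dia a \<psi>)
  obtain j where j: "j \<notin> noms_seq (A, B)"
    using finite_noms_seq[OF Dia.prems(3)] by (metis ex_new_if_finite infinite_UNIV_nat)
  have "derivable_from H (insert (At i (Dia a (Nom j))) (insert (At j \<psi>) A), B)"
    using Dia.prems
    by (intro derivable_from_logical_rule
        [OF G_logical_rule.DiaR[of i a j "insert (At j \<psi>) A" \<psi> B]])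
      (auto simp: insert_absorb intro: Dia.IH)
  with Dia.prems j show ?case
    by (intro derivable_from_logical_rule[OF G_logical_rule.DiaL[of j i a \<psi> A B]])
      (auto simp: insert_absorb)
next
  case Eq
  then show ?case
    using derivable_from_identity_Cmpf[of i True] by (simp add: Cmpf_def)
next
  case Neq
  then show ?case
    using derivable_from_identity_Cmpf[of i False] by (simp add: Cmpf_def)
qed simp_all

lemma derivable_from_Imp_right:
  "At i \<phi> \<in> B \<or> At i \<psi> \<in> A \<Longrightarrow> wf_seq (A, B) \<Longrightarrow>
    derivable_from H (A, insert (At i (Imp \<phi> \<psi>)) B)"
  by (rule derivable_from_logical_rule[OF G_logical_rule.ImpR[of i \<phi> A \<psi> B]])
    (auto intro: derivable_from_identity[of i \<phi>] derivable_from_identity[of i \<psi>])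

lemma derivable_from_Imp_left_modus_ponens:
  "At i \<phi> \<in> A \<Longrightarrow> At i \<psi> \<in> B \<Longrightarrow> wf_seq (A, B) \<Longrightarrow>
    derivable_from H (insert (At i (Imp \<phi> \<psi>)) A, B)"
  by (rule derivable_from_logical_rule[OF G_logical_rule.ImpL[of A i \<phi> B \<psi>]])
    (auto intro: derivable_from_identity[of i \<phi>] derivable_from_identity[of i \<psi>])

lemma derivable_from_At_right:
  "At i \<phi> \<in> A \<Longrightarrow> wf_seq (A, B) \<Longrightarrow> derivable_from H (A, insert (At j (At i \<phi>)) B)"
  by (rule derivable_from_logical_rule[OF G_logical_rule.AtR[of A i \<phi> B j]])
    (auto intro: derivable_from_identity[of i \<phi>])

lemma derivable_from_At_left:
  "At i \<phi> \<in> B \<Longrightarrow> wf_seq (A, B) \<Longrightarrow> derivable_from H (insert (At j (At i \<phi>)) A, B)"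
  by (rule derivable_from_logical_rule[OF G_logical_rule.AtL[of i \<phi> A B j]])
    (auto intro: derivable_from_identity[of i \<phi>])

lemma derivable_from_Dia_right:
  "At i (Dia a (Nom j)) \<in> A \<Longrightarrow> At j \<phi> \<in> A \<Longrightarrow> wf_seq (A, B) \<Longrightarrow>
    derivable_from H (A, insert (At i (Dia a \<phi>)) B)"
  by (rule derivable_from_logical_rule[OF G_logical_rule.DiaR[of i a j A \<phi> B]])
    (auto simp: insert_absorb intro: derivable_from_identity[of j \<phi>])

theorem theorem2:
  fixes Ps :: "('m::finite, 'c::finite) seq list" and C S :: "('m, 'c) seq"
  assumes "G_logical_inst Ps C"
    and "S \<in> set Ps"
  shows "derivable_from {C} S"
proof -
  from assms have rule: "G_logical_rule Ps C"
    and premiss: "S \<in> set Ps" "wf_seq C" "wf_seq S"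
    by (auto simp: G_logical_inst_def)
  from rule show ?thesis
  proof cases
    case ImpL
    with premiss show ?thesis by (auto intro!: derivable_from_by_left_cut derivable_from_Imp_right)
  next
    case ImpR
    with premiss show ?thesis
      by (auto intro!: derivable_from_by_right_cut derivable_from_Imp_left_modus_ponens)
  next
    case AtL
    with premiss show ?thesis by (auto intro!: derivable_from_by_left_cut derivable_from_At_right)
  next
    case AtR
    with premiss show ?thesis by (auto intro!: derivable_from_by_right_cut derivable_from_At_left)
  next
    case DiaL
    with premiss show ?thesis by (auto intro!: derivable_from_by_left_cut derivable_from_Dia_right)
  next
    case CmpL
    with premiss show ?thesis by (auto intro!: derivable_from_by_left_cut derivable_from_Cmpf_right)
  next
    case NEqL
    with premiss show ?thesis by (auto intro!: derivable_from_by_left_cut derivable_from_Neq_right)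
  next
    case NEqR
    with premiss show ?thesis by (auto intro!: derivable_from_by_right_cut derivable_from_Neq_left)
  qed (use premiss in \<open>auto intro!: derivable_from_hyp_weakened\<close>)
qed

end
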